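(* Let $S$ be a finite alphabet and let $h$ be a cellular automaton on $S^{\mathbb{Z}}$ which is an involution. Let $N\subset\mathbb{Z}$ be its minimal neighbourhood, so that $h(x)_k=\phi(x_{k+n_1},\dots,x_{k+n_t})$ with $N=\{n_1<\dots<n_t\}$ and $\phi$ depending essentially on each argument. Then $h$ is left-permutative if and only if $h$ is one-way to the right, i.e. if and only if $\min N\ge 0$.
   Context: A cellular automaton (CA) on $S^{\mathbb{Z}}$ is a continuous, shift-commuting map, given by a local rule $\phi$ on a finite neighbourhood. A CA is an involution if $h\circ h=\mathrm{id}$. The CA $h$ is left-permutative if, for every fixed values of the other arguments, the map $a\mapsto \phi(a,x_{n_2},\dots,x_{n_t})$ (variation of the argument at the leftmost neighbourhood position $n_1=\min N$) is a bijection of $S$. The CA $h$ is one-way to the right if its neighbourhood is contained in $\mathbb{N}_0=\{0,1,2,\dots\}$, i.e. $h(x)_k$ depends only on $x_j$ with $j\ge k$. *)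

theory Defs
  imports Main
begin

definition shift :: "int \<Rightarrow> (int \<Rightarrow> 'a) \<Rightarrow> (int \<Rightarrow> 'a)" where
  "shift k x = (\<lambda>i. x (i + k))"

definition is_CA :: "((int \<Rightarrow> 'a) \<Rightarrow> (int \<Rightarrow> 'a)) \<Rightarrow> bool" where
  "is_CA h \<longleftrightarrow> (\<forall>k x. h (shift k x) = shift k (h x)) \<and>
     (\<exists>N. finite N \<and> (\<forall>x y. (\<forall>n\<in>N. x n = y n) \<longrightarrow> h x 0 = h y 0))"

definition min_nbhd :: "((int \<Rightarrow> 'a) \<Rightarrow> (int \<Rightarrow> 'a)) \<Rightarrow> int set" where
  "min_nbhd h = {n. \<exists>x a. h (x(n := a)) 0 \<noteq> h x 0}"

definition involution :: "((int \<Rightarrow> 'a) \<Rightarrow> (int \<Rightarrow> 'a)) \<Rightarrow> bool" where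
  "involution h \<longleftrightarrow> h \<circ> h = id"

definition left_permutative :: "((int \<Rightarrow> 'a) \<Rightarrow> (int \<Rightarrow> 'a)) \<Rightarrow> bool" where
  "left_permutative h \<longleftrightarrow> (\<forall>x. bij (\<lambda>a. h (x(Min (min_nbhd h) := a)) 0))"

definition one_way_right :: "((int \<Rightarrow> 'a) \<Rightarrow> (int \<Rightarrow> 'a)) \<Rightarrow> bool" where
  "one_way_right h \<longleftrightarrow> min_nbhd h \<subseteq> {0..}"

end

theory Submission
  imports Defs
begin

text \<open>
  Write N for the minimal neighbourhood of the CA h and m = Min N.
  First, N is finite and is itself a neighbourhood, so h x k depends only on the
  coordinates x j with j \<ge> k + m.  If h is left-permutative, a "rightmost
  difference" propagates: when x and y agree to the right of p and differ at p,
  then h x and h y agree to the right of p - m and differ at p - m.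
  (\<Rightarrow>) If m < 0, take configurations differing only at 2m; applying h twice moves
  the rightmost difference to 0, so h (h x) and h (h y) differ at 0 although
  x 0 = y 0, contradicting h \<circ> h = id.
  (\<Leftarrow>) If m \<ge> 0 and x, y differ only at m with h x 0 = h y 0, then h x and h y
  agree at all j \<ge> 0; since h (h x) m reads only coordinates \<ge> 2m \<ge> 0, we get
  x m = y m, so the local rule is injective (hence bijective) in its leftmost
  argument.  The degenerate case N = {} forces a one-letter alphabet.
\<close>

lemma change_nonessential_coordinates:
  assumes "finite F"
    and "\<And>i. i \<notin> F \<Longrightarrow> x i = y i"
    and "\<And>i. i \<in> F \<Longrightarrow> i \<notin> min_nbhd h"
  shows "h x 0 = h y 0"
  using assms
proof (induction F arbitrary: x rule: finite_induct)
  case empty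
  then have "x = y" by auto
  then show ?case by simp
next
  case (insert n F)
  have "n \<notin> min_nbhd h" using insert.prems by auto
  then have "h (x(n := y n)) 0 = h x 0" unfolding min_nbhd_def by auto
  moreover have "h (x(n := y n)) 0 = h y 0"
    by (rule insert.IH) (use insert.prems in auto)
  ultimately show ?case by simp
qed

lemma min_nbhd_subset_nbhd:
  assumes "\<And>x y. (\<forall>n\<in>N. x n = y n) \<Longrightarrow> h x 0 = h y 0"
  shows "min_nbhd h \<subseteq> N"
proof
  fix n assume "n \<in> min_nbhd h"
  then obtain x a where change: "h (x(n := a)) 0 \<noteq> h x 0"
    unfolding min_nbhd_def by blast
  show "n \<in> N"
  proof (rule ccontr)
    assume "n \<notin> N"
    then have "h (x(n := a)) 0 = h x 0" by (intro assms) auto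
    with change show False by contradiction
  qed
qed

lemma CA_min_nbhd:
  assumes "is_CA h"
  shows CA_min_nbhd_finite: "finite (min_nbhd h)"
    and CA_min_nbhd_local: "\<And>x y. (\<forall>n\<in>min_nbhd h. x n = y n) \<Longrightarrow> h x 0 = h y 0"
proof -
  obtain N where N: "finite N" "\<And>x y. (\<forall>n\<in>N. x n = y n) \<Longrightarrow> h x 0 = h y 0"
    using assms unfolding is_CA_def by blast
  have sub: "min_nbhd h \<subseteq> N" using N(2) by (rule min_nbhd_subset_nbhd)
  then show "finite (min_nbhd h)" using N(1) finite_subset by blast
  fix x y :: "int \<Rightarrow> 'a" assume agree: "\<forall>n\<in>min_nbhd h. x n = y n"
  define w where "w = (\<lambda>i. if i \<in> N then x i else y i)"
  have "h w 0 = h x 0" by (rule N(2)) (simp add: w_def)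
  moreover have "h w 0 = h y 0"
    by (rule change_nonessential_coordinates[of "N - min_nbhd h"])
       (use N(1) agree in \<open>auto simp: w_def\<close>)
  ultimately show "h x 0 = h y 0" by simp
qed

lemma CA_at_cell:
  assumes "is_CA h"
  shows "h x k = h (shift k x) 0"
proof -
  have "h (shift k x) = shift k (h x)" using assms unfolding is_CA_def by blast
  then show ?thesis by (simp add: shift_def)
qed

lemma CA_local_at:
  assumes "is_CA h" and "\<And>n. n \<in> min_nbhd h \<Longrightarrow> x (k + n) = y (k + n)"
  shows "h x k = h y k"
proof -
  have "h (shift k x) 0 = h (shift k y) 0"
    by (rule CA_min_nbhd_local[OF assms(1)]) (use assms(2) in \<open>simp add: shift_def add.commute\<close>)
  then show ?thesis using CA_at_cell[OF assms(1)] by metis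
qed

lemma CA_depends_right_of:
  assumes "is_CA h" and "\<And>j. j \<ge> k + Min (min_nbhd h) \<Longrightarrow> x j = y j"
  shows "h x k = h y k"
proof (rule CA_local_at[OF assms(1)])
  fix n assume "n \<in> min_nbhd h"
  then have "Min (min_nbhd h) \<le> n" using CA_min_nbhd_finite[OF assms(1)] by simp
  then show "x (k + n) = y (k + n)" by (intro assms(2)) simp
qed

lemma involution_apply:
  assumes "involution h"
  shows "h (h x) = x"
  using assms unfolding involution_def by (metis comp_apply id_apply)

text \<open>With empty neighbourhood h is constant, so an involutive h forces the
  alphabet to have a single letter.\<close>

lemma involution_empty_nbhd_trivial_alphabet:
  fixes h :: "(int \<Rightarrow> 'a) \<Rightarrow> (int \<Rightarrow> 'a)"
  assumes "is_CA h" and "involution h" and "min_nbhd h = {}"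
  shows "(a :: 'a) = b"
proof -
  have "h (h (\<lambda>_. a)) 0 = h (h (\<lambda>_. b)) 0"
    by (rule CA_local_at[OF assms(1), of _ 0, simplified]) (use assms(3) in simp)
  then show ?thesis using involution_apply[OF assms(2)] by metis
qed

lemma left_permutative_inj_at:
  assumes "is_CA h" and "left_permutative h"
  shows "inj (\<lambda>c. h (x(k + Min (min_nbhd h) := c)) k)"
proof -
  let ?m = "Min (min_nbhd h)"
  have "h (x(k + ?m := c)) k = h ((shift k x)(?m := c)) 0" for c
  proof -
    have "shift k (x(k + ?m := c)) = (shift k x)(?m := c)"
      by (auto simp: shift_def)
    then show ?thesis using CA_at_cell[OF assms(1), of "x(k + ?m := c)" k] by simp
  qed
  moreover have "inj (\<lambda>c. h ((shift k x)(?m := c)) 0)"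
    using assms(2) bij_is_inj unfolding left_permutative_def by blast
  ultimately show ?thesis by simp
qed

lemma left_permutative_rightmost_difference:
  assumes "is_CA h" and "left_permutative h"
    and agree: "\<And>j. j > p \<Longrightarrow> x j = y j" and differ: "x p \<noteq> y p"
  shows "\<And>j. j > p - Min (min_nbhd h) \<Longrightarrow> h x j = h y j"
    and "h x (p - Min (min_nbhd h)) \<noteq> h y (p - Min (min_nbhd h))"
proof -
  let ?m = "Min (min_nbhd h)"
  show "h x j = h y j" if "j > p - ?m" for j
    by (rule CA_depends_right_of[OF assms(1)]) (use that agree in auto)
  have "h (x(p := y p)) (p - ?m) = h y (p - ?m)"
    by (rule CA_depends_right_of[OF assms(1)]) (use agree in auto)
  moreover have "h (x(p := x p)) (p - ?m) \<noteq> h (x(p := y p)) (p - ?m)"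
    using left_permutative_inj_at[OF assms(1,2), of x "p - ?m"] differ
    unfolding inj_def by auto
  ultimately show "h x (p - ?m) \<noteq> h y (p - ?m)" by simp
qed

lemma left_permutative_involution_imp_nonneg:
  assumes "is_CA h" and "involution h" and "left_permutative h"
    and "min_nbhd h \<noteq> {}"
  shows "Min (min_nbhd h) \<ge> 0"
proof (rule ccontr)
  let ?m = "Min (min_nbhd h)"
  assume "\<not> ?m \<ge> 0"
  have "?m \<in> min_nbhd h" using CA_min_nbhd_finite[OF assms(1)] assms(4) by simp
  then obtain z and a :: 'a where "h (z(?m := a)) 0 \<noteq> h z 0"
    unfolding min_nbhd_def by blast
  then have ab: "a \<noteq> z ?m" by (metis fun_upd_triv)
  define u :: "int \<Rightarrow> 'a" where "u = (\<lambda>_. a)"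
  define v where "v = u(2 * ?m := z ?m)"
  have agree0: "u j = v j" if "j > 2 * ?m" for j
    using that by (simp add: u_def v_def)
  have differ0: "u (2 * ?m) \<noteq> v (2 * ?m)" using ab by (simp add: u_def v_def)
  have agree1: "h u j = h v j" if "j > ?m" for j
    using left_permutative_rightmost_difference(1)[where x = u and y = v, OF assms(1,3) agree0 differ0] that by simp
  have differ1: "h u ?m \<noteq> h v ?m"
    using left_permutative_rightmost_difference(2)[where x = u and y = v, OF assms(1,3) agree0 differ0] by simp
  have "h (h u) 0 \<noteq> h (h v) 0"
    using left_permutative_rightmost_difference(2)[where x = "h u" and y = "h v", OF assms(1,3) agree1 differ1] by simp
  moreover have "h (h w) = w" for w
    using assms(2) by (rule involution_apply)
  moreover have "u 0 = v 0" using \<open>\<not> ?m \<ge> 0\<close> by (simp add: u_def v_def)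
  ultimately show False by simp
qed

lemma involution_nonneg_imp_inj_leftmost:
  assumes "is_CA h" and "involution h" and "Min (min_nbhd h) \<ge> 0"
  shows "inj (\<lambda>c. h (x(Min (min_nbhd h) := c)) 0)"
proof (rule injI)
  let ?m = "Min (min_nbhd h)"
  fix a b assume same: "h (x(?m := a)) 0 = h (x(?m := b)) 0"
  define u where "u = x(?m := a)"
  define v where "v = x(?m := b)"
  have agree: "h u j = h v j" if "j \<ge> 0" for j
  proof (cases "j = 0")
    case True
    then show ?thesis using same by (simp add: u_def v_def)
  next
    case False
    with that show ?thesis
      by (intro CA_depends_right_of[OF assms(1)]) (auto simp: u_def v_def)
  qed
  have "h (h u) ?m = h (h v) ?m"
    by (rule CA_depends_right_of[OF assms(1)]) (use assms(3) agree in auto)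
  moreover have "h (h w) = w" for w
    using assms(2) by (rule involution_apply)
  ultimately have "u ?m = v ?m" by simp
  then show "a = b" by (simp add: u_def v_def)
qed

theorem mainTheorem5:
  fixes h :: "(int \<Rightarrow> 'a::finite) \<Rightarrow> (int \<Rightarrow> 'a)"
  assumes "is_CA h" and "involution h"
  shows "left_permutative h \<longleftrightarrow> one_way_right h"
proof (cases "min_nbhd h = {}")
  case True
  then have "\<And>a b :: 'a. a = b"
    by (rule involution_empty_nbhd_trivial_alphabet[OF assms])
  then have "left_permutative h" unfolding left_permutative_def bij_def inj_def surj_def
    by blast
  with True show ?thesis by (simp add: one_way_right_def)
next
  case nonempty: False
  have fin: "finite (min_nbhd h)" by (rule CA_min_nbhd_finite[OF assms(1)])
  have "one_way_right h \<longleftrightarrow> Min (min_nbhd h) \<ge> 0"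
    using fin nonempty unfolding one_way_right_def by (auto simp: subset_eq)
  moreover have "left_permutative h \<longleftrightarrow> Min (min_nbhd h) \<ge> 0"
  proof
    assume "left_permutative h"
    then show "Min (min_nbhd h) \<ge> 0"
      by (rule left_permutative_involution_imp_nonneg[OF assms _ nonempty])
  next
    assume "Min (min_nbhd h) \<ge> 0"
    then have "inj (\<lambda>c. h (x(Min (min_nbhd h) := c)) 0)" for x
      by (rule involution_nonneg_imp_inj_leftmost[OF assms])
    then show "left_permutative h"
      unfolding left_permutative_def bij_def by (simp add: finite_UNIV_inj_surj)
  qed
  ultimately show ?thesis by simp
qed

end
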